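(* Suppose the queries are chosen by GP-TS-SDF, i.e., $x_t\in\arg\max_{x\in\mathcal{Q}}f_t(x)$ where $f_t\sim\mathcal{GP}(\mu_{t-1}(\cdot),\nu_t^2\sigma^2_{t-1}(\cdot))$ given $\mathcal{F}_{t-1}$. For any filtration $\mathcal{F}_{t-1}$, conditioned on the event $E^f(t)$, $$\mathbb{P}\left(x_t\in\mathcal{Q}\setminus S_t\mid\mathcal{F}_{t-1}\right)\ge p-1/t^2,\qquad p=\frac{1}{4e\sqrt{\pi}}.$$
   Context: Setting. Let $\mathcal{Q}\subset\mathbb{R}^n$ be finite, $k$ a positive semidefinite kernel on $\mathcal{Q}$ with $k\le1$, and $f$ in the RKHS of $k$ with $\|f\|_k\le\mathcal{B}_f$; $x^\star\in\arg\max_{x\in\mathcal{Q}}f(x)$ and $\Delta(x)=f(x^\star)-f(x)$. Queries $x_1,x_2,\ldots$ are selected sequentially; feedback $y_t=f(x_t)+\epsilon_t$ with $R$-sub-Gaussian $\epsilon_t$ and $|y_t|\le\mathcal{B}_y$, observed after a random delay $d_t\in\{0,1,\ldots\}$ drawn from $\mathcal{D}$. For an integer $m\ge1$, $\rho_m=\mathbb{P}(d_s\le m)$, censored feedback $\tilde y_{s,t}=y_s\mathbb{1}\{d_s\le\min(m,t-s)\}$. With $\lambda>0$: $\mu_{t-1}(x)=\mathbf{k}_{t-1}(x)^\top(\mathbf{K}_{t-1}+\lambda I)^{-1}\tilde{\mathbf{y}}_{t-1}$, $\sigma^2_{t-1}(x,x')=k(x,x')-\mathbf{k}_{t-1}(x)^\top(\mathbf{K}_{t-1}+\lambda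 I)^{-1}\mathbf{k}_{t-1}(x')$, $\sigma^2_{t-1}(x)=\sigma^2_{t-1}(x,x)$, $\mathbf{k}_{t-1}(x)=(k(x,x_i))_{i\le t-1}$, $\mathbf{K}_{t-1}=(k(x_i,x_j))_{i,j\le t-1}$, $\tilde{\mathbf{y}}_{t-1}=(\tilde y_{s,t})_{s\le t-1}$. $\gamma_t=\max_A\frac12\log\det(I+\lambda^{-1}\mathbf{K}_A)$ over collections of $t$ points. For $\delta\in(0,1)$: $\beta_t=\mathcal{B}_f+(R+\mathcal{B}_y)\sqrt{2(\gamma_{t-1}+1+\log(4/\delta))}$, $\nu_t=\mathcal{B}_y\sum_{s=t-m}^{t-1}\sigma_{t-1}(x_s)+\beta_t$ (terms with $s<1$ omitted), $c_t=\nu_t(1+\sqrt{2\log(|\mathcal{Q}|t^2)})$. $\mathcal{F}_{t-1}$: history up to iteration $t-1$. $E^f(t)$: the event that $|\mu_{t-1}(x)-\rho_mf(x)|\le\nu_t\sigma_{t-1}(x)$ for all $x\in\mathcal{Q}$. Saturated set: $S_t=\{x\in\mathcal{Q}:\rho_m\Delta(x)>c_t\sigma_{t-1}(x)\}$. *)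

theory Defs
  imports "HOL-Probability.Probability"
          "Jordan_Normal_Form.Determinant"
          "Jordan_Normal_Form.Gauss_Jordan_Elimination"
begin

definition psd_kernel :: "'a set \<Rightarrow> ('a \<Rightarrow> 'a \<Rightarrow> real) \<Rightarrow> bool" where
  "psd_kernel Q k \<longleftrightarrow> (\<forall>x\<in>Q. \<forall>y\<in>Q. k x y = k y x) \<and>
     (\<forall>c :: 'a \<Rightarrow> real. (\<Sum>x\<in>Q. \<Sum>y\<in>Q. c x * c y * k x y) \<ge> 0)"

text \<open>On a finite domain Q the RKHS of k is the span of the sections k z (z in Q), and
  the RKHS norm of f = sum_z alpha_z k(z,.) is sqrt (alpha^T K alpha) (independent of the
  representation). \<open>rkhs_norm_le Q k f B\<close> says: f is in the RKHS and its norm is at most B.\<close>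
definition rkhs_norm_le :: "'a set \<Rightarrow> ('a \<Rightarrow> 'a \<Rightarrow> real) \<Rightarrow> ('a \<Rightarrow> real) \<Rightarrow> real \<Rightarrow> bool" where
  "rkhs_norm_le Q k f B \<longleftrightarrow> 0 \<le> B \<and> (\<exists>\<alpha> :: 'a \<Rightarrow> real.
      (\<forall>x\<in>Q. f x = (\<Sum>z\<in>Q. \<alpha> z * k z x)) \<and>
      (\<Sum>z\<in>Q. \<Sum>w\<in>Q. \<alpha> z * \<alpha> w * k z w) \<le> B\<^sup>2)"

definition kvec :: "('a \<Rightarrow> 'a \<Rightarrow> real) \<Rightarrow> 'a list \<Rightarrow> 'a \<Rightarrow> real vec" where
  "kvec k xs x = vec (length xs) (\<lambda>i. k (xs ! i) x)"

definition Kmat :: "('a \<Rightarrow> 'a \<Rightarrow> real) \<Rightarrow> 'a list \<Rightarrow> real mat" where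
  "Kmat k xs = mat (length xs) (length xs) (\<lambda>(i, j). k (xs ! i) (xs ! j))"

definition reg_inv :: "('a \<Rightarrow> 'a \<Rightarrow> real) \<Rightarrow> real \<Rightarrow> 'a list \<Rightarrow> real mat" where
  "reg_inv k lam xs = the (mat_inverse (Kmat k xs + lam \<cdot>\<^sub>m 1\<^sub>m (length xs)))"

definition post_mean :: "('a \<Rightarrow> 'a \<Rightarrow> real) \<Rightarrow> real \<Rightarrow> 'a list \<Rightarrow> real vec \<Rightarrow> 'a \<Rightarrow> real" where
  "post_mean k lam xs ys x = kvec k xs x \<bullet> (reg_inv k lam xs *\<^sub>v ys)"

definition post_cov :: "('a \<Rightarrow> 'a \<Rightarrow> real) \<Rightarrow> real \<Rightarrow> 'a list \<Rightarrow> 'a \<Rightarrow> 'a \<Rightarrow> real" where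
  "post_cov k lam xs x x' = k x x' - kvec k xs x \<bullet> (reg_inv k lam xs *\<^sub>v kvec k xs x')"

definition post_sd :: "('a \<Rightarrow> 'a \<Rightarrow> real) \<Rightarrow> real \<Rightarrow> 'a list \<Rightarrow> 'a \<Rightarrow> real" where
  "post_sd k lam xs x = sqrt (post_cov k lam xs x x)"

text \<open>Censored feedback vector at iteration t: entry i (0-based, i.e. s = i+1) is
  y_s * 1{d_s <= min(m, t - s)}.\<close>
definition censored_obs :: "nat \<Rightarrow> nat \<Rightarrow> real list \<Rightarrow> nat list \<Rightarrow> real vec" where
  "censored_obs m t ys ds = vec (length ys)
     (\<lambda>i. if ds ! i \<le> min m (t - Suc i) then ys ! i else 0)"

definition max_info_gain :: "'a set \<Rightarrow> ('a \<Rightarrow> 'a \<Rightarrow> real) \<Rightarrow> real \<Rightarrow> nat \<Rightarrow> real" where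
  "max_info_gain Q k lam n = Max ((\<lambda>A. ln (det (1\<^sub>m n + (1 / lam) \<cdot>\<^sub>m Kmat k A)) / 2)
        ` {A. set A \<subseteq> Q \<and> length A = n})"

definition beta_t :: "'a set \<Rightarrow> ('a \<Rightarrow> 'a \<Rightarrow> real) \<Rightarrow> real \<Rightarrow> real \<Rightarrow> real \<Rightarrow> real \<Rightarrow> real \<Rightarrow> nat \<Rightarrow> real" where
  "beta_t Q k lam Bf R By \<delta> t =
     Bf + (R + By) * sqrt (2 * (max_info_gain Q k lam (t - 1) + 1 + ln (4 / \<delta>)))"

text \<open>nu_t = B_y * sum_{s = t-m}^{t-1} sigma_{t-1}(x_s) + beta_t  (terms with s < 1 omitted);
  xs ! i is x_{i+1}.\<close>
definition nu_t :: "'a set \<Rightarrow> ('a \<Rightarrow> 'a \<Rightarrow> real) \<Rightarrow> real \<Rightarrow> real \<Rightarrow> real \<Rightarrow> real \<Rightarrow> real \<Rightarrow> nat \<Rightarrow> nat \<Rightarrow> 'a list \<Rightarrow> real" where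
  "nu_t Q k lam Bf R By \<delta> m t xs =
     By * (\<Sum>i\<in>{(t - 1) - m..<t - 1}. post_sd k lam xs (xs ! i)) + beta_t Q k lam Bf R By \<delta> t"

definition c_t :: "'a set \<Rightarrow> real \<Rightarrow> nat \<Rightarrow> real" where
  "c_t Q \<nu> t = \<nu> * (1 + sqrt (2 * ln (real (card Q) * (real t)\<^sup>2)))"

definition real_normal_rv :: "'w measure \<Rightarrow> ('w \<Rightarrow> real) \<Rightarrow> real \<Rightarrow> real \<Rightarrow> bool" where
  "real_normal_rv M X \<mu> v \<longleftrightarrow> X \<in> borel_measurable M \<and>
     (if v = 0 then (AE \<omega> in M. X \<omega> = \<mu>)
      else distributed M lborel X (normal_density \<mu> (sqrt v)))"

definition gaussian_process ::
  "'w measure \<Rightarrow> ('w \<Rightarrow> 'a \<Rightarrow> real) \<Rightarrow> 'a set \<Rightarrow> ('a \<Rightarrow> real) \<Rightarrow> ('a \<Rightarrow> 'a \<Rightarrow> real) \<Rightarrow> bool" where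
  "gaussian_process M F Q m C \<longleftrightarrow> prob_space M \<and>
     (\<forall>c :: 'a \<Rightarrow> real. real_normal_rv M (\<lambda>\<omega>. \<Sum>x\<in>Q. c x * F \<omega> x)
         (\<Sum>x\<in>Q. c x * m x) (\<Sum>x\<in>Q. \<Sum>y\<in>Q. c x * c y * C x y))"

end

theory Submission
  imports Defs
begin

(* Write s(x) = nu_t sigma_{t-1}(x) and L = sqrt (2 log (|Q| t^2)), so that
   c_t sigma_{t-1}(x) = (1 + L) s(x), and on E^f(t) we have |mu_{t-1}(x) - rho f(x)| <= s(x).
   If the sample satisfies f_t(xstar) >= mu_{t-1}(xstar) + s(xstar) and f_t(x) <= mu_{t-1}(x) + L s(x)
   for every x, then the maximiser x_t obeys
   rho f(xstar) <= f_t(xstar) <= f_t(x_t) <= rho f(x_t) + (1 + L) s(x_t), so x_t is not saturated.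
   The first event has probability at least e^-2 / sqrt (2 pi) >= 1 / (4 e sqrt pi) since the
   Gaussian density is at least e^-2 / (sqrt (2 pi) s) on [mu + s, mu + 2 s]; by the Gaussian tail
   bound and a union bound the second fails with probability at most |Q| exp (-L^2 / 2) = 1 / t^2. *)

lemma normal_density_le_shifted:
  assumes \<sigma>: "0 < \<sigma>" and L: "0 \<le> L" and x: "\<mu> + \<sigma> * L < x"
  shows "normal_density \<mu> \<sigma> x \<le> exp (- L\<^sup>2 / 2) * normal_density (\<mu> + \<sigma> * L) \<sigma> x"
proof -
  define u where "u = (x - \<mu>) / \<sigma>"
  have "L \<le> u" using x \<sigma> by (simp add: u_def field_simps)
  then have "- u\<^sup>2 / 2 \<le> - L\<^sup>2 / 2 + - (u - L)\<^sup>2 / 2"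
    using L by (simp add: power2_eq_square field_simps) (smt (verit) mult_left_mono mult_nonneg_nonneg)
  then have "exp (- u\<^sup>2 / 2) \<le> exp (- L\<^sup>2 / 2) * exp (- (u - L)\<^sup>2 / 2)"
    by (simp flip: exp_add)
  moreover have "x - \<mu> = \<sigma> * u" "x - (\<mu> + \<sigma> * L) = \<sigma> * (u - L)"
    using \<sigma> by (simp_all add: u_def field_simps)
  ultimately show ?thesis
    using \<sigma> by (simp add: normal_density_def power_mult_distrib divide_right_mono)
qed

lemma nn_integral_normal_upper_tail_le:
  assumes \<sigma>: "0 < \<sigma>" and L: "0 \<le> L"
  shows "(\<integral>\<^sup>+x. ennreal (normal_density \<mu> \<sigma> x) * indicator {\<mu> + \<sigma> * L<..} x \<partial>lborel) \<le> exp (- L\<^sup>2 / 2)"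
proof -
  have "(\<integral>\<^sup>+x. ennreal (normal_density \<mu> \<sigma> x) * indicator {\<mu> + \<sigma> * L<..} x \<partial>lborel)
      \<le> (\<integral>\<^sup>+x. ennreal (exp (- L\<^sup>2 / 2)) * normal_density (\<mu> + \<sigma> * L) \<sigma> x \<partial>lborel)"
    using normal_density_le_shifted[OF \<sigma> L]
    by (intro nn_integral_mono) (auto simp: indicator_def simp flip: ennreal_mult intro: ennreal_leI)
  also have "\<dots> = exp (- L\<^sup>2 / 2)"
    using \<sigma> by (simp add: nn_integral_cmult nn_integral_eq_integral normal_density_nonneg)
  finally show ?thesis .
qed

lemma nn_integral_normal_upper_tail_ge:
  assumes \<sigma>: "0 < \<sigma>"
  shows "exp (-2) / sqrt (2 * pi) \<le> (\<integral>\<^sup>+x. ennreal (normal_density \<mu> \<sigma> x) * indicator {\<mu> + \<sigma>..} x \<partial>lborel)"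
proof -
  define c where "c = exp (-2) / (sqrt (2 * pi) * \<sigma>)"
  have c_le: "c \<le> normal_density \<mu> \<sigma> x" if "\<mu> + \<sigma> \<le> x" "x \<le> \<mu> + 2 * \<sigma>" for x
  proof -
    have "(x - \<mu>)\<^sup>2 \<le> (2 * \<sigma>)\<^sup>2" using that \<sigma> by (intro power_mono) auto
    then have "- 2 \<le> - (x - \<mu>)\<^sup>2 / (2 * \<sigma>\<^sup>2)" using \<sigma> by (simp add: field_simps power_mult_distrib)
    then show ?thesis
      using \<sigma> by (simp add: normal_density_def c_def real_sqrt_mult divide_right_mono)
  qed
  have "ennreal (exp (-2) / sqrt (2 * pi)) = ennreal c * emeasure lborel {\<mu> + \<sigma>..\<mu> + 2 * \<sigma>}"
    using \<sigma> by (simp add: c_def flip: ennreal_mult)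
  also have "\<dots> = (\<integral>\<^sup>+x. ennreal c * indicator {\<mu> + \<sigma>..\<mu> + 2 * \<sigma>} x \<partial>lborel)"
    by (simp add: nn_integral_cmult_indicator)
  also have "\<dots> \<le> (\<integral>\<^sup>+x. ennreal (normal_density \<mu> \<sigma> x) * indicator {\<mu> + \<sigma>..} x \<partial>lborel)"
    using c_le by (intro nn_integral_mono) (auto simp: indicator_def intro: ennreal_leI)
  finally show ?thesis .
qed

lemma real_normal_rv_abs_variance:
  assumes "real_normal_rv M X \<mu> v"
  shows "real_normal_rv M X \<mu> \<bar>v\<bar>"
proof -
  have "(sqrt \<bar>v\<bar>)\<^sup>2 = (sqrt v)\<^sup>2"
    by (simp add: power2_eq_square)
  then have "normal_density \<mu> (sqrt \<bar>v\<bar>) = normal_density \<mu> (sqrt v)"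
    by (simp add: normal_density_def fun_eq_iff)
  with assms show ?thesis by (simp add: real_normal_rv_def)
qed

lemma real_normal_rv_upper_tail_le:
  assumes M: "prob_space M" and X: "real_normal_rv M X \<mu> (\<sigma>\<^sup>2)" and \<sigma>: "0 \<le> \<sigma>" and L: "0 \<le> L"
  shows "measure M {\<omega> \<in> space M. \<mu> + \<sigma> * L < X \<omega>} \<le> exp (- L\<^sup>2 / 2)"
proof -
  interpret prob_space M by (fact M)
  have set_eq: "{\<omega> \<in> space M. \<mu> + \<sigma> * L < X \<omega>} = X -` {\<mu> + \<sigma> * L<..} \<inter> space M"
    by auto
  show ?thesis
  proof (cases "\<sigma> = 0")
    case True
    with X have "AE \<omega> in M. X \<omega> = \<mu>" by (simp add: real_normal_rv_def)
    with True have "measure M {\<omega> \<in> space M. \<mu> + \<sigma> * L < X \<omega>} = 0"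
      using X unfolding set_eq real_normal_rv_def
      by (subst prob_eq_0) (auto intro: measurable_sets)
    then show ?thesis by simp
  next
    case False
    with \<sigma> X have "distributed M lborel X (normal_density \<mu> \<sigma>)"
      by (simp add: real_normal_rv_def)
    then have "emeasure M {\<omega> \<in> space M. \<mu> + \<sigma> * L < X \<omega>}
        = (\<integral>\<^sup>+x. ennreal (normal_density \<mu> \<sigma> x) * indicator {\<mu> + \<sigma> * L<..} x \<partial>lborel)"
      unfolding set_eq by (rule distributed_emeasure) simp
    also have "\<dots> \<le> exp (- L\<^sup>2 / 2)"
      using False \<sigma> L by (intro nn_integral_normal_upper_tail_le) auto
    finally show ?thesis by (simp add: emeasure_eq_measure)
  qed
qed

lemma real_normal_rv_upper_tail_ge:
  assumes M: "prob_space M" and X: "real_normal_rv M X \<mu> (\<sigma>\<^sup>2)" and \<sigma>: "0 \<le> \<sigma>"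
  shows "exp (-2) / sqrt (2 * pi) \<le> measure M {\<omega> \<in> space M. \<mu> + \<sigma> \<le> X \<omega>}"
proof -
  interpret prob_space M by (fact M)
  have set_eq: "{\<omega> \<in> space M. \<mu> + \<sigma> \<le> X \<omega>} = X -` {\<mu> + \<sigma>..} \<inter> space M"
    by auto
  show ?thesis
  proof (cases "\<sigma> = 0")
    case True
    with X have "AE \<omega> in M. X \<omega> = \<mu>" by (simp add: real_normal_rv_def)
    with True have "measure M {\<omega> \<in> space M. \<mu> + \<sigma> \<le> X \<omega>} = 1"
      using X unfolding set_eq real_normal_rv_def
      by (subst prob_eq_1) (auto intro: measurable_sets)
    moreover have "exp (-2) / sqrt (2 * pi) \<le> (1 :: real)"
      using pi_gt3 by (simp add: divide_le_eq order_trans[OF _ real_sqrt_ge_one])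
    ultimately show ?thesis by simp
  next
    case False
    with \<sigma> X have D: "distributed M lborel X (normal_density \<mu> \<sigma>)"
      by (simp add: real_normal_rv_def)
    have "ennreal (exp (-2) / sqrt (2 * pi))
        \<le> (\<integral>\<^sup>+x. ennreal (normal_density \<mu> \<sigma> x) * indicator {\<mu> + \<sigma>..} x \<partial>lborel)"
      using False \<sigma> by (intro nn_integral_normal_upper_tail_ge) auto
    also have "\<dots> = emeasure M {\<omega> \<in> space M. \<mu> + \<sigma> \<le> X \<omega>}"
      unfolding set_eq by (rule distributed_emeasure[OF D, symmetric]) simp
    finally show ?thesis
      by (simp add: emeasure_eq_measure)
  qed
qed

lemma gaussian_process_marginal:
  assumes "gaussian_process M F Q m C" "finite Q" "x \<in> Q"
  shows "real_normal_rv M (\<lambda>\<omega>. F \<omega> x) (m x) (C x x)"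
proof -
  have "\<forall>c. real_normal_rv M (\<lambda>\<omega>. \<Sum>y\<in>Q. c y * F \<omega> y) (\<Sum>y\<in>Q. c y * m y)
      (\<Sum>y\<in>Q. \<Sum>z\<in>Q. c y * c z * C y z)"
    using assms(1) by (simp add: gaussian_process_def)
  from this[THEN spec, of "\<lambda>y. of_bool (y = x)"] assms(2,3) show ?thesis
    by (simp add: mult.assoc flip: sum_distrib_left)
qed

lemma inverse_4_exp_sqrt_pi_le:
  "1 / (4 * exp 1 * sqrt pi) \<le> exp (-2) / sqrt (2 * pi)"
proof -
  have "exp 1 * exp 1 \<le> (2.72 :: real) * 2.72"
    using e_less_272 by (intro mult_mono) auto
  then have "(exp 1 * sqrt 2)\<^sup>2 \<le> (4 :: real)\<^sup>2"
    by (simp add: power_mult_distrib power2_eq_square[of "exp 1"])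
  then have "exp 1 * sqrt 2 \<le> 4"
    by (rule power2_le_imp_le) simp
  then have "1 / (4 * exp 1 * sqrt pi) \<le> 1 / (exp 1 * (exp 1 * sqrt 2) * sqrt pi)"
    by (intro divide_left_mono mult_right_mono) (auto simp: mult.commute)
  also have "\<dots> = exp (-2) / sqrt (2 * pi)"
    by (simp add: exp_minus inverse_eq_divide real_sqrt_mult flip: exp_add)
  finally show ?thesis .
qed

lemma prob_argmax_not_saturated:
  fixes F :: "'w \<Rightarrow> 'a \<Rightarrow> real" and X :: "'w \<Rightarrow> 'a"
  assumes M: "prob_space M" and Q: "finite Q" and x0: "x0 \<in> Q"
    and X_meas: "X \<in> measurable M (count_space UNIV)"
    and X_argmax: "\<forall>\<omega>\<in>space M. X \<omega> \<in> Q \<and> (\<forall>x\<in>Q. F \<omega> x \<le> F \<omega> (X \<omega>))"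
    and conf: "\<And>x. x \<in> Q \<Longrightarrow> \<bar>\<mu> x - g x\<bar> \<le> s x"
    and normal: "\<And>x. x \<in> Q \<Longrightarrow> real_normal_rv M (\<lambda>\<omega>. F \<omega> x) (\<mu> x) ((s x)\<^sup>2)"
    and L: "0 \<le> L"
  shows "exp (-2) / sqrt (2 * pi) - card Q * exp (- L\<^sup>2 / 2)
    \<le> measure M {\<omega> \<in> space M. X \<omega> \<in> Q - {x \<in> Q. s x * (1 + L) < g x0 - g x}}"
    (is "_ \<le> measure M ?T")
proof -
  interpret prob_space M by (fact M)
  define A where "A = {\<omega> \<in> space M. \<mu> x0 + s x0 \<le> F \<omega> x0}"
  define B where "B x = {\<omega> \<in> space M. \<mu> x + s x * L < F \<omega> x}" for x
  have s_nonneg: "0 \<le> s x" if "x \<in> Q" for x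
    using conf[OF that] by linarith
  have F_meas: "(\<lambda>\<omega>. F \<omega> x) \<in> borel_measurable M" if "x \<in> Q" for x
    using normal[OF that] by (simp add: real_normal_rv_def)
  have T_sets: "?T \<in> events"
    by (rule measurable_sets_Collect[OF X_meas]) simp
  have A_sets: "A \<in> events"
    unfolding A_def by (rule measurable_sets_Collect[OF F_meas[OF x0]]) simp
  have B_sets: "B x \<in> events" if "x \<in> Q" for x
    unfolding B_def by (rule measurable_sets_Collect[OF F_meas[OF that]]) simp
  have "A - (\<Union>x\<in>Q. B x) \<subseteq> ?T"
  proof
    fix \<omega> assume \<omega>: "\<omega> \<in> A - (\<Union>x\<in>Q. B x)"
    then have "\<omega> \<in> space M" by (simp add: A_def)
    with X_argmax x0 have XQ: "X \<omega> \<in> Q" and "F \<omega> x0 \<le> F \<omega> (X \<omega>)" by auto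
    moreover have "\<mu> x0 + s x0 \<le> F \<omega> x0" "F \<omega> (X \<omega>) \<le> \<mu> (X \<omega>) + s (X \<omega>) * L"
      using \<omega> XQ by (auto simp: A_def B_def)
    moreover have "g x0 \<le> \<mu> x0 + s x0" "\<mu> (X \<omega>) \<le> g (X \<omega>) + s (X \<omega>)"
      using conf[OF x0] conf[OF XQ] by linarith+
    ultimately show "\<omega> \<in> ?T"
      using \<open>\<omega> \<in> space M\<close> by (auto simp: algebra_simps)
  qed
  then have "prob A - prob (\<Union>x\<in>Q. B x) \<le> prob ?T"
    using A_sets B_sets Q T_sets
    by (intro order_trans[OF measure_diff_le_measure_setdiff] finite_measure_mono)
      (auto simp: fmeasurable_eq_sets)
  moreover have "exp (-2) / sqrt (2 * pi) \<le> prob A"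
    unfolding A_def by (rule real_normal_rv_upper_tail_ge[OF M normal[OF x0] s_nonneg[OF x0]])
  moreover have "prob (\<Union>x\<in>Q. B x) \<le> (\<Sum>x\<in>Q. prob (B x))"
    using Q B_sets by (rule measure_UNION_le)
  moreover have "(\<Sum>x\<in>Q. prob (B x)) \<le> (\<Sum>x\<in>Q. exp (- L\<^sup>2 / 2))"
    unfolding B_def using real_normal_rv_upper_tail_le[OF M normal s_nonneg L]
    by (intro sum_mono) auto
  ultimately show ?thesis by simp
qed

theorem lemma4:
  fixes Q :: "(real ^ 'n) set"
    and k :: "real ^ 'n \<Rightarrow> real ^ 'n \<Rightarrow> real"
    and f :: "real ^ 'n \<Rightarrow> real"
    and xstar :: "real ^ 'n"
    and Bf R By lam \<delta> :: real
    and D :: "nat pmf"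
    and m t :: nat
    and xs :: "(real ^ 'n) list" and ys :: "real list" and ds :: "nat list"
    and M :: "'w measure"
    and F :: "'w \<Rightarrow> real ^ 'n \<Rightarrow> real"
    and X :: "'w \<Rightarrow> real ^ 'n"
  assumes Q: "finite Q"
    and k_psd: "psd_kernel Q k"
    and k_le1: "\<forall>x\<in>Q. \<forall>y\<in>Q. k x y \<le> 1"
    and f_rkhs: "rkhs_norm_le Q k f Bf"
    and xstar: "xstar \<in> Q" "\<forall>x\<in>Q. f x \<le> f xstar"
    and R: "R \<ge> 0" and By: "By \<ge> 0"
    and lam: "lam > 0" and \<delta>: "0 < \<delta>" "\<delta> < 1"
    and m: "m \<ge> 1" and t: "t \<ge> 1"
    and hist: "length xs = t - 1" "length ys = t - 1" "length ds = t - 1" "set xs \<subseteq> Q"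
    and ys_bd: "\<forall>y\<in>set ys. \<bar>y\<bar> \<le> By"
    and Ef: "\<forall>x\<in>Q.
      \<bar>post_mean k lam xs (censored_obs m t ys ds) x - measure_pmf.prob D {..m} * f x\<bar>
        \<le> nu_t Q k lam Bf R By \<delta> m t xs * post_sd k lam xs x"
    and GP: "gaussian_process M F Q (post_mean k lam xs (censored_obs m t ys ds))
      (\<lambda>x x'. (nu_t Q k lam Bf R By \<delta> m t xs)\<^sup>2 * post_cov k lam xs x x')"
    and X_meas: "X \<in> measurable M (count_space UNIV)"
    and X_argmax: "\<forall>\<omega>\<in>space M. X \<omega> \<in> Q \<and> (\<forall>x\<in>Q. F \<omega> x \<le> F \<omega> (X \<omega>))"
  shows "measure M {\<omega> \<in> space M. X \<omega> \<in> Q -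
           {x \<in> Q. measure_pmf.prob D {..m} * (f xstar - f x)
                     > c_t Q (nu_t Q k lam Bf R By \<delta> m t xs) t * post_sd k lam xs x}}
         \<ge> 1 / (4 * exp 1 * sqrt pi) - 1 / (real t)\<^sup>2"
proof -
  define \<rho> where "\<rho> = measure_pmf.prob D {..m}"
  define \<nu> where "\<nu> = nu_t Q k lam Bf R By \<delta> m t xs"
  define \<mu> where "\<mu> = post_mean k lam xs (censored_obs m t ys ds)"
  define s where "s x = \<nu> * post_sd k lam xs x" for x
  define L where "L = sqrt (2 * ln (real (card Q) * (real t)\<^sup>2))"
  have M: "prob_space M"
    using GP by (simp add: gaussian_process_def)
  have conf: "\<bar>\<mu> x - \<rho> * f x\<bar> \<le> s x" if "x \<in> Q" for x
    using Ef that by (simp add: \<mu>_def \<rho>_def \<nu>_def s_def)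
  have normal: "real_normal_rv M (\<lambda>\<omega>. F \<omega> x) (\<mu> x) ((s x)\<^sup>2)" if "x \<in> Q" for x
  proof -
    \<comment> \<open>post_cov is not known to be nonnegative here, and sqrt is odd on negative reals\<close>
    have "(s x)\<^sup>2 = \<bar>\<nu>\<^sup>2 * post_cov k lam xs x x\<bar>"
      by (simp add: s_def post_sd_def power_mult_distrib abs_mult power2_eq_square[of "sqrt _"])
    then show ?thesis
      using real_normal_rv_abs_variance[OF gaussian_process_marginal[OF GP Q that]]
      by (simp add: \<mu>_def \<nu>_def)
  qed
  have card_Q: "0 < card Q"
    using Q xstar(1) card_gt_0_iff by blast
  with t have "1 \<le> card Q * t\<^sup>2"
    by (simp add: Suc_le_eq)
  then have "1 \<le> real (card Q) * (real t)\<^sup>2"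
    by (metis of_nat_1 of_nat_le_iff of_nat_mult of_nat_power)
  then have L: "0 \<le> L" and "card Q * exp (- L\<^sup>2 / 2) = 1 / (real t)\<^sup>2"
    using card_Q t by (simp_all add: L_def exp_minus field_simps)
  moreover have "{x \<in> Q. \<rho> * (f xstar - f x) > c_t Q \<nu> t * post_sd k lam xs x}
      = {x \<in> Q. s x * (1 + L) < \<rho> * f xstar - \<rho> * f x}"
    by (auto simp: c_t_def s_def L_def algebra_simps)
  ultimately show ?thesis
    using prob_argmax_not_saturated[where g = "\<lambda>x. \<rho> * f x", OF M Q xstar(1) X_meas X_argmax conf normal L]
      inverse_4_exp_sqrt_pi_le
    by (simp add: \<rho>_def \<nu>_def)
qed

end
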